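(* Let $\mathcal{X}=\mathcal{X}^{(1)}\times\cdots\times\mathcal{X}^{(d)}$ with each $\mathcal{X}^{(j)}$ finite, $(S_i)_{i=1}^n$ a partition of $\{1,\dots,d\}$ into pairwise disjoint nonempty sets, $\pi\in\mathcal{P}(\mathcal{X})$ positive and $P\in\mathcal{L}(\mathcal{X})$. Then $\mathbb{I}^\pi(P)=\mathbb{I}^\pi(P,\mathcal{L}_{\otimes_{i=1}^nS_i}(\mathcal{X}))+\mathbb{I}^\pi(\otimes_{i=1}^nP^{(S_i)}_\pi)=\mathbb{I}^\pi(P,\mathcal{L}_{\otimes_{i=1}^nS_i}(\mathcal{X}))+\sum_{i=1}^n\mathbb{I}^{\pi^{(S_i)}}(P^{(S_i)}_\pi)$.
   Context: $D_{KL}^{\pi}(M\|L):=\sum_{x,y}\pi(x)M(x,y)\ln\frac{M(x,y)}{L(x,y)}$. For $S\subseteq\{1,\dots,d\}$: $\mathcal{X}^{(S)}=\prod_{j\in S}\mathcal{X}^{(j)}$, $\pi^{(S)}(x^{(S)})=\sum_{x^{(-S)}}\pi(x)$, $P^{(S)}_\pi(x^{(S)},y^{(S)}):=\frac{\sum_{x^{(-S)},y^{(-S)}}\pi(x)P(x,y)}{\pi^{(S)}(x^{(S)})}$. Tensor products: $(\otimes_iL_i)(x,y)=\prod_iL_i(x^{(S_i)},y^{(S_i)})$. $\mathcal{L}_{\otimes_{i=1}^nS_i}(\mathcal{X})$ is the set of transition matrices of the form $\otimes_{i=1}^nL_i$ with $L_i\in\mathcal{L}(\mathcal{X}^{(S_i)})$,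 and $\mathbb{I}^\pi(P,\mathcal{L}_{\otimes_{i=1}^nS_i}(\mathcal{X})):=\min_{L_i\in\mathcal{L}(\mathcal{X}^{(S_i)})}D^\pi_{KL}(P\|\otimes_{i=1}^nL_i)$. For $\mu$ on $\prod_{j\in T}\mathcal{X}^{(j)}$ and $Q$ a transition matrix there, the distance to independence is $\mathbb{I}^\mu(Q):=\min_{L_j\in\mathcal{L}(\mathcal{X}^{(j)}),j\in T}D^\mu_{KL}(Q\|\otimes_{j\in T}L_j)$. *)

theory Defs
  imports Complex_Main "HOL-Library.FuncSet" "HOL-Library.Extended_Real"
begin

text \<open>States of the product space X^(T) = prod_{j in T} Xs j are extensional
  functions in PiE T Xs; x^(S) is restrict x S.\<close>

definition transition_matrix :: "'s set \<Rightarrow> ('s \<Rightarrow> 's \<Rightarrow> real) \<Rightarrow> bool" where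
  "transition_matrix A L \<longleftrightarrow>
     (\<forall>x\<in>A. \<forall>y\<in>A. 0 \<le> L x y) \<and> (\<forall>x\<in>A. (\<Sum>y\<in>A. L x y) = 1)"

definition prob_dist :: "'s set \<Rightarrow> ('s \<Rightarrow> real) \<Rightarrow> bool" where
  "prob_dist A p \<longleftrightarrow> (\<forall>x\<in>A. 0 \<le> p x) \<and> sum p A = 1"

definition KL_div :: "('s \<Rightarrow> real) \<Rightarrow> 's set \<Rightarrow> ('s \<Rightarrow> 's \<Rightarrow> real) \<Rightarrow> ('s \<Rightarrow> 's \<Rightarrow> real) \<Rightarrow> ereal" where
  "KL_div p A M L = (\<Sum>x\<in>A. \<Sum>y\<in>A.
      (if p x * M x y = 0 then 0
       else if L x y = 0 then \<infinity>
       else ereal (p x * M x y * ln (M x y / L x y))))"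

definition marginal :: "(nat \<Rightarrow> 'a set) \<Rightarrow> nat set \<Rightarrow> nat set \<Rightarrow> ((nat \<Rightarrow> 'a) \<Rightarrow> real) \<Rightarrow> (nat \<Rightarrow> 'a) \<Rightarrow> real" where
  "marginal Xs I S p xs = (\<Sum>x\<in>{x\<in>PiE I Xs. restrict x S = xs}. p x)"

definition marg_kernel :: "(nat \<Rightarrow> 'a set) \<Rightarrow> nat set \<Rightarrow> nat set \<Rightarrow> ((nat \<Rightarrow> 'a) \<Rightarrow> real)
     \<Rightarrow> ((nat \<Rightarrow> 'a) \<Rightarrow> (nat \<Rightarrow> 'a) \<Rightarrow> real) \<Rightarrow> (nat \<Rightarrow> 'a) \<Rightarrow> (nat \<Rightarrow> 'a) \<Rightarrow> real" where
  "marg_kernel Xs I S p P xs ys =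
     (\<Sum>x\<in>{x\<in>PiE I Xs. restrict x S = xs}. \<Sum>y\<in>{y\<in>PiE I Xs. restrict y S = ys}. p x * P x y)
     / marginal Xs I S p xs"

definition tensor :: "(nat \<Rightarrow> nat set) \<Rightarrow> nat \<Rightarrow> (nat \<Rightarrow> (nat \<Rightarrow> 'a) \<Rightarrow> (nat \<Rightarrow> 'a) \<Rightarrow> real)
     \<Rightarrow> (nat \<Rightarrow> 'a) \<Rightarrow> (nat \<Rightarrow> 'a) \<Rightarrow> real" where
  "tensor S n Ls x y = (\<Prod>i\<in>{1..n}. Ls i (restrict x (S i)) (restrict y (S i)))"

text \<open>I^pi(P, L_{otimes S_i}(X)) (minimum written as infimum; it is attained).\<close>
definition I_part :: "(nat \<Rightarrow> 'a set) \<Rightarrow> nat set \<Rightarrow> ((nat \<Rightarrow> 'a) \<Rightarrow> real)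
     \<Rightarrow> ((nat \<Rightarrow> 'a) \<Rightarrow> (nat \<Rightarrow> 'a) \<Rightarrow> real) \<Rightarrow> (nat \<Rightarrow> nat set) \<Rightarrow> nat \<Rightarrow> ereal" where
  "I_part Xs I p P S n = Inf {KL_div p (PiE I Xs) P (tensor S n Ls) | Ls.
       \<forall>i\<in>{1..n}. transition_matrix (PiE (S i) Xs) (Ls i)}"

definition dist_indep :: "(nat \<Rightarrow> 'a set) \<Rightarrow> nat set \<Rightarrow> ((nat \<Rightarrow> 'a) \<Rightarrow> real)
     \<Rightarrow> ((nat \<Rightarrow> 'a) \<Rightarrow> (nat \<Rightarrow> 'a) \<Rightarrow> real) \<Rightarrow> ereal" where
  "dist_indep Xs T mu Q = Inf {KL_div mu (PiE T Xs) Q (\<lambda>x y. \<Prod>j\<in>T. Ls j (x j) (y j)) | Ls.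
       \<forall>j\<in>T. transition_matrix (Xs j) (Ls j)}"

end

theory Submission
  imports Defs
begin

text \<open>The heart of the proof is a Pythagorean identity: for every product kernel
  \<open>\<otimes>\<^sub>i L\<^sub>i\<close> over the blocks,
  \<open>D\<^sup>\<pi>(P || \<otimes>\<^sub>i L\<^sub>i) = D\<^sup>\<pi>(P || \<otimes>\<^sub>i P^(S_i)) + \<Sum>\<^sub>i D^(\<pi>^(S_i))(P^(S_i) || L\<^sub>i)\<close>,
  where \<open>P^(S_i)\<close> is the marginal kernel of block \<open>S_i\<close>. It follows by splitting the
  logarithm of the product and regrouping each sum along the fibres of \<open>x \<mapsto> x^(S_i)\<close>.
  All terms are nonnegative (Gibbs' inequality), so the distance to the block-product kernels is
  attained at \<open>\<otimes>\<^sub>i P^(S_i)\<close>. Taking for \<open>L\<^sub>i\<close> products over single coordinates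
  and minimising gives the first equation; the infimum of the sum splits into the sum of the
  infima because the \<open>i\<close>-th summand depends only on the coordinates in \<open>S_i\<close>. Applying
  the identity to \<open>\<otimes>\<^sub>i P^(S_i)\<close>, whose block marginal kernels are the \<open>P^(S_i)\<close>
  themselves, gives the second.\<close>

section \<open>Kullback-Leibler divergence of transition matrices\<close>

lemma diff_le_mult_ln_div:
  fixes q l :: real
  assumes "0 < q" "0 < l"
  shows "q - l \<le> q * ln (q / l)"
proof -
  have "ln (l / q) \<le> l / q - 1"
    using assms by (intro ln_le_minus_one) auto
  then have "q * (1 - l / q) \<le> q * ln (q / l)"
    using assms by (intro mult_left_mono) (auto simp: ln_div)
  moreover have "q * (1 - l / q) = q - l"
    using assms by (simp add: field_simps)
  ultimately show ?thesis
    by simp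
qed

lemma mult_diff_le_mult_ln_div:
  fixes w q l :: real
  assumes "0 \<le> w" "0 \<le> q" "0 \<le> l" "w * q \<noteq> 0 \<Longrightarrow> l \<noteq> 0"
  shows "w * (q - l) \<le> w * q * ln (q / l)"
proof (cases "w * q = 0")
  case True
  moreover have "0 \<le> w * l"
    using assms by simp
  ultimately show ?thesis
    by (simp add: right_diff_distrib del: mult_eq_0_iff)
next
  case False
  then have "0 < w" "0 < q" "0 < l"
    using assms by (auto simp: less_le)
  then show ?thesis
    using diff_le_mult_ln_div[of q l] by (simp add: mult.assoc)
qed

lemma ln_div_prod_eq:
  fixes f g :: "'i \<Rightarrow> real"
  assumes "finite I" "0 < r" "\<forall>i\<in>I. 0 < f i" "\<forall>i\<in>I. 0 < g i"
  shows "ln (r / prod f I) = ln (r / prod g I) + (\<Sum>i\<in>I. ln (g i / f i))"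
proof -
  have ln_div_prod: "ln (r / prod h I) = ln r - (\<Sum>i\<in>I. ln (h i))" if "\<forall>i\<in>I. 0 < h i"
    for h :: "'i \<Rightarrow> real"
  proof -
    have "ln (prod h I) = (\<Sum>i\<in>I. ln (h i))"
      using that assms(1) by (intro ln_prod) auto
    moreover have "0 < prod h I"
      using that by (simp add: prod_pos)
    ultimately show ?thesis
      using assms(2) by (simp add: ln_div)
  qed
  have "(\<Sum>i\<in>I. ln (g i / f i)) = (\<Sum>i\<in>I. ln (g i) - ln (f i))"
  proof (rule sum.cong[OF refl])
    fix i assume "i \<in> I"
    then have "0 < f i" "0 < g i"
      using assms(3,4) by auto
    then show "ln (g i / f i) = ln (g i) - ln (f i)"
      by (simp add: ln_div)
  qed
  then show ?thesis
    using assms(3,4) by (simp add: ln_div_prod sum_subtractf)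
qed

lemma sum_ereal_neq_minf:
  fixes f :: "'b \<Rightarrow> ereal"
  assumes "\<And>a. a \<in> A \<Longrightarrow> f a \<noteq> -\<infinity>"
  shows "sum f A \<noteq> -\<infinity>"
  using assms by (induction A rule: infinite_finite_induct) auto

lemma KL_div_neq_minf: "KL_div p A M L \<noteq> -\<infinity>"
  unfolding KL_div_def by (intro sum_ereal_neq_minf) auto

text \<open>No case distinction is needed in the real sum: off the support of \<open>p x * M x y\<close>
  the summand carries the factor \<open>0\<close>.\<close>

lemma KL_div_eq_ereal:
  assumes "\<forall>x\<in>A. \<forall>y\<in>A. p x * M x y \<noteq> 0 \<longrightarrow> L x y \<noteq> 0"
  shows "KL_div p A M L = ereal (\<Sum>x\<in>A. \<Sum>y\<in>A. p x * M x y * ln (M x y / L x y))"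
proof -
  have "KL_div p A M L = (\<Sum>x\<in>A. \<Sum>y\<in>A. ereal (p x * M x y * ln (M x y / L x y)))"
    unfolding KL_div_def using assms by (intro sum.cong refl) auto
  then show ?thesis by simp
qed

lemma KL_div_eq_infinity:
  assumes "finite A" "x \<in> A" "y \<in> A" "p x * M x y \<noteq> 0" "L x y = 0"
  shows "KL_div p A M L = \<infinity>"
proof -
  have "(\<Sum>y'\<in>A. if p x * M x y' = 0 then 0 else if L x y' = 0 then \<infinity>
      else ereal (p x * M x y' * ln (M x y' / L x y'))) = \<infinity>"
    using assms by (subst sum_Pinfty) auto
  then show ?thesis
    unfolding KL_div_def using assms by (subst sum_Pinfty) (auto intro!: bexI[of _ x])
qed

lemma KL_div_self: "KL_div p A M M = 0"
  unfolding KL_div_def by (intro sum.neutral ballI) auto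

lemma KL_div_cong:
  assumes "\<forall>x\<in>A. \<forall>y\<in>A. p x = p' x \<and> M x y = M' x y \<and> L x y = L' x y"
  shows "KL_div p A M L = KL_div p' A M' L'"
  unfolding KL_div_def using assms by (intro sum.cong refl) auto

lemma KL_div_nonneg:
  assumes "finite A" and mu_nonneg: "\<forall>x\<in>A. 0 \<le> mu x"
    and Q_nonneg: "\<forall>x\<in>A. \<forall>y\<in>A. 0 \<le> Q x y"
    and Q_rows: "\<forall>x\<in>A. 0 < mu x \<longrightarrow> sum (Q x) A = 1"
    and L: "transition_matrix A L"
  shows "0 \<le> KL_div mu A Q L"
proof (cases "\<forall>x\<in>A. \<forall>y\<in>A. mu x * Q x y \<noteq> 0 \<longrightarrow> L x y \<noteq> 0")
  case False
  then obtain x y where "x \<in> A" "y \<in> A" "mu x * Q x y \<noteq> 0" "L x y = 0"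
    by blast
  then show ?thesis
    using KL_div_eq_infinity[OF \<open>finite A\<close>] by simp
next
  case support: True
  have L_nonneg: "\<forall>x\<in>A. \<forall>y\<in>A. 0 \<le> L x y"
    using L unfolding transition_matrix_def by blast
  have term_ge: "mu x * (Q x y - L x y) \<le> mu x * Q x y * ln (Q x y / L x y)"
    if "x \<in> A" "y \<in> A" for x y
    using that mu_nonneg Q_nonneg L_nonneg support by (intro mult_diff_le_mult_ln_div) auto
  have rows_vanish: "(\<Sum>y\<in>A. mu x * (Q x y - L x y)) = 0" if "x \<in> A" for x
  proof (cases "mu x = 0")
    case False
    then have "sum (Q x) A = 1"
      using that mu_nonneg Q_rows by (simp add: less_le)
    then show ?thesis
      using that L unfolding transition_matrix_def
      by (simp add: sum_distrib_left[symmetric] sum_subtractf)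
  qed simp
  have "0 = (\<Sum>x\<in>A. \<Sum>y\<in>A. mu x * (Q x y - L x y))"
    using rows_vanish by simp
  also have "\<dots> \<le> (\<Sum>x\<in>A. \<Sum>y\<in>A. mu x * Q x y * ln (Q x y / L x y))"
    using term_ge by (intro sum_mono) auto
  finally show ?thesis
    using KL_div_eq_ereal[OF support] by simp
qed

lemma transition_matrix_uniform:
  assumes "finite A" "A \<noteq> {}"
  shows "transition_matrix A (\<lambda>_ _. 1 / real (card A))"
  using assms unfolding transition_matrix_def by simp

lemma transition_matrix_PiE_prod:
  assumes "finite T" "\<forall>j\<in>T. finite (Xs j)" "\<forall>j\<in>T. transition_matrix (Xs j) (L j)"
  shows "transition_matrix (PiE T Xs) (\<lambda>x y. \<Prod>j\<in>T. L j (x j) (y j))"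
  unfolding transition_matrix_def
proof safe
  fix x y assume "x \<in> PiE T Xs" "y \<in> PiE T Xs"
  then show "0 \<le> (\<Prod>j\<in>T. L j (x j) (y j))"
    using assms unfolding transition_matrix_def by (intro prod_nonneg) (auto simp: PiE_iff)
next
  fix x assume x: "x \<in> PiE T Xs"
  have "(\<Sum>y\<in>PiE T Xs. \<Prod>j\<in>T. L j (x j) (y j)) = (\<Prod>j\<in>T. \<Sum>c\<in>Xs j. L j (x j) c)"
    using assms by (subst prod_sum_PiE) auto
  also have "\<dots> = 1"
    using assms x unfolding transition_matrix_def by (intro prod.neutral) (auto simp: PiE_iff)
  finally show "(\<Sum>y\<in>PiE T Xs. \<Prod>j\<in>T. L j (x j) (y j)) = 1" .
qed

lemma dist_indep_eq_INF:
  "dist_indep Xs T mu Q = (INF Ls\<in>Pi T (\<lambda>j. Collect (transition_matrix (Xs j))).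
     KL_div mu (PiE T Xs) Q (\<lambda>x y. \<Prod>j\<in>T. Ls j (x j) (y j)))"
  unfolding dist_indep_def setcompr_eq_image by (simp add: Pi_def Ball_def)

section \<open>Infima of separable functionals\<close>

lemma INF_Pi_local:
  fixes F :: "('j \<Rightarrow> 'b) \<Rightarrow> 'c::complete_lattice"
  assumes "T \<subseteq> D" "Pi D C \<noteq> {}"
    and local: "\<And>f g. \<forall>j\<in>T. f j = g j \<Longrightarrow> F f = F g"
  shows "(INF f\<in>Pi D C. F f) = (INF f\<in>Pi T C. F f)"
proof (rule antisym)
  show "(INF f\<in>Pi T C. F f) \<le> (INF f\<in>Pi D C. F f)"
    using \<open>T \<subseteq> D\<close> by (intro INF_superset_mono) auto
  obtain u where u: "u \<in> Pi D C"
    using \<open>Pi D C \<noteq> {}\<close> by blast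
  show "(INF f\<in>Pi D C. F f) \<le> (INF f\<in>Pi T C. F f)"
  proof (rule INF_greatest)
    fix f assume f: "f \<in> Pi T C"
    define g where "g j = (if j \<in> T then f j else u j)" for j
    have "g \<in> Pi D C"
      using f u by (auto simp: g_def)
    then have "(INF f\<in>Pi D C. F f) \<le> F g"
      by (rule INF_lower)
    also have "F g = F f"
      by (rule local) (simp add: g_def)
    finally show "(INF f\<in>Pi D C. F f) \<le> F f" .
  qed
qed

text \<open>If each summand depends only on the coordinates in its own block and the blocks are
  disjoint, near-minimisers of the summands can be glued into one function.\<close>

lemma INF_sum_separable:
  fixes F :: "'i \<Rightarrow> ('j \<Rightarrow> 'b) \<Rightarrow> ereal"
  assumes "Pi D C \<noteq> {}"
    and "\<forall>i\<in>K. \<forall>k\<in>K. i \<noteq> k \<longrightarrow> S i \<inter> S k = {}"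
    and "\<And>i f g. i \<in> K \<Longrightarrow> \<forall>j\<in>S i. f j = g j \<Longrightarrow> F i f = F i g"
    and "\<And>i f. i \<in> K \<Longrightarrow> f \<in> Pi D C \<Longrightarrow> 0 \<le> F i f"
  shows "(INF f\<in>Pi D C. \<Sum>i\<in>K. F i f) = (\<Sum>i\<in>K. INF f\<in>Pi D C. F i f)"
  using assms(2-)
proof (induction K rule: infinite_finite_induct)
  case (insert i K)
  have "(INF f\<in>Pi D C. \<Sum>k\<in>insert i K. F k f) = (INF f\<in>Pi D C. F i f + (\<Sum>k\<in>K. F k f))"
    using insert.hyps by simp
  also have "\<dots> = (INF f\<in>Pi D C. F i f) + (INF f\<in>Pi D C. \<Sum>k\<in>K. F k f)"
  proof (rule INF_ereal_add_directed)
    fix f assume "f \<in> Pi D C"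
    then show "0 \<le> F i f" "0 \<le> (\<Sum>k\<in>K. F k f)"
      using insert.prems(3) by (auto intro: sum_nonneg)
  next
    fix f g assume f: "f \<in> Pi D C" and g: "g \<in> Pi D C"
    define h where "h j = (if j \<in> S i then f j else g j)" for j
    have "h \<in> Pi D C"
      using f g by (auto simp: h_def)
    moreover have "F i h = F i f"
      using insert.prems(2) by (simp add: h_def)
    moreover have "F k h = F k g" if "k \<in> K" for k
    proof -
      have "S k \<inter> S i = {}"
        using insert.prems(1) insert.hyps(2) that by (metis insertCI)
      then show ?thesis
        using that by (intro insert.prems(2)) (auto simp: h_def)
    qed
    then have "(\<Sum>k\<in>K. F k h) = (\<Sum>k\<in>K. F k g)"
      by (rule sum.cong[OF refl])
    ultimately show "\<exists>h\<in>Pi D C. F i h + (\<Sum>k\<in>K. F k h) \<le> F i f + (\<Sum>k\<in>K. F k g)"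
      by (intro bexI[of _ h]) simp_all
  qed
  also have "(INF f\<in>Pi D C. \<Sum>k\<in>K. F k f) = (\<Sum>k\<in>K. INF f\<in>Pi D C. F k f)"
    using insert.prems by (intro insert.IH) auto
  finally show ?case
    using insert.hyps by simp
qed (use assms(1) in simp_all)

section \<open>Product spaces over a partition of the coordinates\<close>

locale block_product =
  fixes Xs :: "nat \<Rightarrow> 'a set" and d n :: nat and S :: "nat \<Rightarrow> nat set"
  assumes finite_factors: "\<forall>j\<in>{1..d}. finite (Xs j)"
    and blocks_disjoint: "\<forall>i\<in>{1..n}. \<forall>k\<in>{1..n}. i \<noteq> k \<longrightarrow> S i \<inter> S k = {}"
    and blocks_cover: "(\<Union>i\<in>{1..n}. S i) = {1..d}"
begin

abbreviation state_space :: "(nat \<Rightarrow> 'a) set" where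
  "state_space \<equiv> PiE {1..d} Xs"

abbreviation block_space :: "nat \<Rightarrow> (nat \<Rightarrow> 'a) set" where
  "block_space i \<equiv> PiE (S i) Xs"

abbreviation kernel_families :: "nat set \<Rightarrow> (nat \<Rightarrow> 'a \<Rightarrow> 'a \<Rightarrow> real) set" where
  "kernel_families T \<equiv> Pi T (\<lambda>j. Collect (transition_matrix (Xs j)))"

definition fiber :: "nat \<Rightarrow> (nat \<Rightarrow> 'a) \<Rightarrow> (nat \<Rightarrow> 'a) set" where
  "fiber i a = {x\<in>state_space. restrict x (S i) = a}"

definition block_of :: "nat \<Rightarrow> nat" where
  "block_of j = (THE i. i \<in> {1..n} \<and> j \<in> S i)"

lemma block_subset: "i \<in> {1..n} \<Longrightarrow> S i \<subseteq> {1..d}"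
  using blocks_cover by blast

lemma finite_block: "i \<in> {1..n} \<Longrightarrow> finite (S i)"
  using block_subset finite_subset by blast

lemma finite_state_space: "finite state_space"
  using finite_factors by (intro finite_PiE) auto

lemma finite_block_space: "i \<in> {1..n} \<Longrightarrow> finite (block_space i)"
  using finite_factors block_subset by (intro finite_PiE finite_block) auto

lemma restrict_in_block_space: "x \<in> state_space \<Longrightarrow> i \<in> {1..n} \<Longrightarrow> restrict x (S i) \<in> block_space i"
  using block_subset[of i] by (auto simp: PiE_iff)

lemma finite_fiber: "finite (fiber i a)"
  using finite_state_space unfolding fiber_def by simp

lemma block_of_eq: "i \<in> {1..n} \<Longrightarrow> j \<in> S i \<Longrightarrow> block_of j = i"
  unfolding block_of_def using blocks_disjoint by (intro the_equality) blast+

lemma block_of: "j \<in> {1..d} \<Longrightarrow> block_of j \<in> {1..n} \<and> j \<in> S (block_of j)"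
  using blocks_cover block_of_eq by blast

lemma bij_betw_restrict_blocks:
  "bij_betw (\<lambda>x. \<lambda>i\<in>{1..n}. restrict x (S i)) state_space (PiE {1..n} block_space)"
proof (rule bij_betw_byWitness[where f'="\<lambda>g. \<lambda>j\<in>{1..d}. g (block_of j) j"])
  have glue: "restrict (\<lambda>j\<in>{1..d}. g (block_of j) j) (S i) = g i"
    if g: "g \<in> PiE {1..n} block_space" and i: "i \<in> {1..n}" for g i
  proof
    fix j show "restrict (\<lambda>j\<in>{1..d}. g (block_of j) j) (S i) j = g i j"
      using g i block_subset[OF i] block_of_eq[OF i]
      by (cases "j \<in> S i") (auto simp: PiE_iff extensional_def)
  qed
  show "\<forall>g\<in>PiE {1..n} block_space. (\<lambda>i\<in>{1..n}. restrict (\<lambda>j\<in>{1..d}. g (block_of j) j) (S i)) = g"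
    using glue by (auto simp: PiE_iff extensional_def)
  show "\<forall>x\<in>state_space. (\<lambda>j\<in>{1..d}. (\<lambda>i\<in>{1..n}. restrict x (S i)) (block_of j) j) = x"
    using block_of by (auto simp: PiE_iff extensional_def)
  show "(\<lambda>x. \<lambda>i\<in>{1..n}. restrict x (S i)) ` state_space \<subseteq> PiE {1..n} block_space"
    using block_subset by (force simp: PiE_iff)
  show "(\<lambda>g. \<lambda>j\<in>{1..d}. g (block_of j) j) ` PiE {1..n} block_space \<subseteq> state_space"
    using block_of by (auto simp: PiE_iff)
qed

lemma sum_prod_restrict_blocks:
  fixes f :: "nat \<Rightarrow> (nat \<Rightarrow> 'a) \<Rightarrow> real"
  shows "(\<Sum>y\<in>state_space. \<Prod>k\<in>{1..n}. f k (restrict y (S k))) = (\<Prod>k\<in>{1..n}. \<Sum>c\<in>block_space k. f k c)"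
proof -
  have "(\<Sum>y\<in>state_space. \<Prod>k\<in>{1..n}. f k (restrict y (S k)))
      = (\<Sum>y\<in>state_space. (\<lambda>g. \<Prod>k\<in>{1..n}. f k (g k)) (\<lambda>i\<in>{1..n}. restrict y (S i)))"
    by (auto intro!: sum.cong prod.cong)
  also have "\<dots> = (\<Sum>g\<in>PiE {1..n} block_space. \<Prod>k\<in>{1..n}. f k (g k))"
    by (rule sum.reindex_bij_betw[OF bij_betw_restrict_blocks])
  also have "\<dots> = (\<Prod>k\<in>{1..n}. \<Sum>c\<in>block_space k. f k c)"
    using finite_block_space by (subst prod_sum_PiE) auto
  finally show ?thesis .
qed

lemma prod_coordinates_eq_tensor:
  fixes L :: "nat \<Rightarrow> 'a \<Rightarrow> 'a \<Rightarrow> real"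
  shows   "(\<lambda>x y. \<Prod>j\<in>{1..d}. L j (x j) (y j)) = tensor S n (\<lambda>i a b. \<Prod>j\<in>S i. L j (a j) (b j))"
proof (intro ext)
  fix x y :: "nat \<Rightarrow> 'a"
  have "(\<Prod>j\<in>{1..d}. L j (x j) (y j)) = (\<Prod>i\<in>{1..n}. \<Prod>j\<in>S i. L j (x j) (y j))"
    unfolding blocks_cover[symmetric] using finite_block blocks_disjoint
    by (intro prod.UNION_disjoint) auto
  then show "(\<Prod>j\<in>{1..d}. L j (x j) (y j)) = tensor S n (\<lambda>i a b. \<Prod>j\<in>S i. L j (a j) (b j)) x y"
    unfolding tensor_def by simp
qed

lemma sum_over_fibers:
  assumes "i \<in> {1..n}"
  shows "(\<Sum>a\<in>block_space i. \<Sum>x\<in>fiber i a. g x) = (\<Sum>x\<in>state_space. g x)"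
proof -
  have "(\<lambda>x. restrict x (S i)) ` state_space \<subseteq> block_space i"
    using restrict_in_block_space[OF _ assms] by blast
  from sum.group[OF finite_state_space finite_block_space[OF assms] this, of g]
  show ?thesis
    unfolding fiber_def by simp
qed

lemma sum_sum_through_fibers:
  fixes g h :: "(nat \<Rightarrow> 'a) \<Rightarrow> (nat \<Rightarrow> 'a) \<Rightarrow> real"
  assumes i: "i \<in> {1..n}"
  shows "(\<Sum>x\<in>state_space. \<Sum>y\<in>state_space. g x y * h (restrict x (S i)) (restrict y (S i)))
       = (\<Sum>a\<in>block_space i. \<Sum>b\<in>block_space i. (\<Sum>x\<in>fiber i a. \<Sum>y\<in>fiber i b. g x y) * h a b)"
proof -
  have "(\<Sum>x\<in>state_space. \<Sum>y\<in>state_space. g x y * h (restrict x (S i)) (restrict y (S i)))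
      = (\<Sum>a\<in>block_space i. \<Sum>x\<in>fiber i a. \<Sum>b\<in>block_space i. \<Sum>y\<in>fiber i b.
           g x y * h (restrict x (S i)) (restrict y (S i)))"
    by (simp only: sum_over_fibers[OF i])
  also have "\<dots> = (\<Sum>a\<in>block_space i. \<Sum>x\<in>fiber i a. \<Sum>b\<in>block_space i. \<Sum>y\<in>fiber i b. g x y * h a b)"
    by (intro sum.cong refl) (auto simp: fiber_def)
  also have "\<dots> = (\<Sum>a\<in>block_space i. \<Sum>b\<in>block_space i. (\<Sum>x\<in>fiber i a. \<Sum>y\<in>fiber i b. g x y) * h a b)"
    by (rule sum.cong[OF refl], subst sum.swap) (simp add: sum_distrib_right)
  finally show ?thesis .
qed

lemma sum_fiber_tensor:
  assumes Q: "\<forall>k\<in>{1..n}. transition_matrix (block_space k) (Q k)"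
    and x: "x \<in> state_space" and i: "i \<in> {1..n}" and b: "b \<in> block_space i"
  shows "(\<Sum>y\<in>fiber i b. tensor S n Q x y) = Q i (restrict x (S i)) b"
proof -
  define f where "f k c = (if k \<noteq> i \<or> c = b then Q k (restrict x (S k)) c else 0)" for k c
  have "(\<Sum>y\<in>fiber i b. tensor S n Q x y)
      = (\<Sum>y\<in>state_space. if restrict y (S i) = b then tensor S n Q x y else 0)"
    unfolding fiber_def by (rule sum.inter_filter[OF finite_state_space])
  also have "\<dots> = (\<Sum>y\<in>state_space. \<Prod>k\<in>{1..n}. f k (restrict y (S k)))"
  proof (rule sum.cong[OF refl])
    fix y
    show "(if restrict y (S i) = b then tensor S n Q x y else 0) = (\<Prod>k\<in>{1..n}. f k (restrict y (S k)))"
    proof (cases "restrict y (S i) = b")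
      case True
      then show ?thesis
        unfolding tensor_def f_def by (auto intro!: prod.cong)
    next
      case False
      have "(\<Prod>k\<in>{1..n}. f k (restrict y (S k))) = 0"
        using i False by (intro prod_zero) (auto simp: f_def intro!: bexI[of _ i])
      then show ?thesis
        using False by simp
    qed
  qed
  also have "\<dots> = (\<Prod>k\<in>{1..n}. \<Sum>c\<in>block_space k. f k c)"
    by (rule sum_prod_restrict_blocks)
  also have "\<dots> = (\<Prod>k\<in>{1..n}. if k = i then Q i (restrict x (S i)) b else 1)"
  proof (rule prod.cong[OF refl])
    fix k assume k: "k \<in> {1..n}"
    show "(\<Sum>c\<in>block_space k. f k c) = (if k = i then Q i (restrict x (S i)) b else 1)"
      using Q k b x finite_block_space[OF k] restrict_in_block_space[OF x k]
      unfolding f_def transition_matrix_def by auto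
  qed
  also have "\<dots> = Q i (restrict x (S i)) b"
    using i by simp
  finally show ?thesis .
qed

end

section \<open>Marginal kernels of the blocks\<close>

locale block_distribution = block_product +
  fixes p :: "(nat \<Rightarrow> 'a) \<Rightarrow> real"
  assumes p_dist: "prob_dist state_space p"
    and p_pos: "\<forall>x\<in>state_space. 0 < p x"
begin

abbreviation block_marginal :: "nat \<Rightarrow> (nat \<Rightarrow> 'a) \<Rightarrow> real" where
  "block_marginal i \<equiv> marginal Xs {1..d} (S i) p"

abbreviation block_kernel ::
  "nat \<Rightarrow> ((nat \<Rightarrow> 'a) \<Rightarrow> (nat \<Rightarrow> 'a) \<Rightarrow> real) \<Rightarrow> (nat \<Rightarrow> 'a) \<Rightarrow> (nat \<Rightarrow> 'a) \<Rightarrow> real" where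
  "block_kernel i R \<equiv> marg_kernel Xs {1..d} (S i) p R"

definition block_flow ::
  "nat \<Rightarrow> ((nat \<Rightarrow> 'a) \<Rightarrow> (nat \<Rightarrow> 'a) \<Rightarrow> real) \<Rightarrow> (nat \<Rightarrow> 'a) \<Rightarrow> (nat \<Rightarrow> 'a) \<Rightarrow> real" where
  "block_flow i R a b = (\<Sum>x\<in>fiber i a. \<Sum>y\<in>fiber i b. p x * R x y)"

lemma factor_nonempty: "j \<in> {1..d} \<Longrightarrow> Xs j \<noteq> {}"
  using p_dist unfolding prob_dist_def by (auto simp: PiE_eq_empty_iff)

lemma fiber_nonempty:
  assumes i: "i \<in> {1..n}" and a: "a \<in> block_space i"
  shows "fiber i a \<noteq> {}"
proof -
  define x where "x = (\<lambda>j\<in>{1..d}. if j \<in> S i then a j else (SOME z. z \<in> Xs j))"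
  have "x \<in> state_space"
    using a factor_nonempty unfolding x_def by (auto simp: PiE_iff some_in_eq)
  moreover have "restrict x (S i) = a"
  proof
    fix j show "restrict x (S i) j = a j"
      using a block_subset[OF i] unfolding x_def
      by (cases "j \<in> S i") (auto simp: PiE_iff extensional_def)
  qed
  ultimately show ?thesis
    unfolding fiber_def by blast
qed

lemma block_marginal_eq: "block_marginal i a = sum p (fiber i a)"
  unfolding marginal_def fiber_def by simp

lemma block_marginal_nonneg: "0 \<le> block_marginal i a"
  unfolding block_marginal_eq using p_pos by (intro sum_nonneg) (auto simp: fiber_def less_imp_le)

lemma block_marginal_pos: "i \<in> {1..n} \<Longrightarrow> a \<in> block_space i \<Longrightarrow> 0 < block_marginal i a"
  unfolding block_marginal_eq using fiber_nonempty finite_fiber p_pos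
  by (intro sum_pos) (auto simp: fiber_def)

lemma block_kernel_eq: "block_kernel i R a b = block_flow i R a b / block_marginal i a"
  unfolding marg_kernel_def block_flow_def fiber_def by simp

lemma block_marginal_mult_kernel:
  "i \<in> {1..n} \<Longrightarrow> a \<in> block_space i \<Longrightarrow> block_marginal i a * block_kernel i R a b = block_flow i R a b"
  using block_marginal_pos[of i a] unfolding block_kernel_eq by simp

lemma block_flow_nonneg:
  "\<forall>x\<in>state_space. \<forall>y\<in>state_space. 0 \<le> R x y \<Longrightarrow> 0 \<le> block_flow i R a b"
  unfolding block_flow_def using p_pos
  by (intro sum_nonneg mult_nonneg_nonneg) (auto simp: fiber_def less_imp_le)

lemma block_kernel_nonneg:
  assumes "\<forall>x\<in>state_space. \<forall>y\<in>state_space. 0 \<le> R x y"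
  shows "0 \<le> block_kernel i R a b"
  unfolding block_kernel_eq using block_flow_nonneg[OF assms] block_marginal_nonneg
  by (rule divide_nonneg_nonneg)

lemma transition_matrix_block_kernel:
  assumes i: "i \<in> {1..n}" and R: "transition_matrix state_space R"
  shows "transition_matrix (block_space i) (block_kernel i R)"
proof -
  have "sum (block_kernel i R a) (block_space i) = 1" if a: "a \<in> block_space i" for a
  proof -
    have "(\<Sum>b\<in>block_space i. block_flow i R a b)
        = (\<Sum>x\<in>fiber i a. p x * (\<Sum>b\<in>block_space i. \<Sum>y\<in>fiber i b. R x y))"
      unfolding block_flow_def by (subst sum.swap) (simp add: sum_distrib_left)
    also have "\<dots> = (\<Sum>x\<in>fiber i a. p x)"
    proof (rule sum.cong[OF refl])
      fix x assume "x \<in> fiber i a"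
      then have "x \<in> state_space"
        by (simp add: fiber_def)
      then show "p x * (\<Sum>b\<in>block_space i. \<Sum>y\<in>fiber i b. R x y) = p x"
        using R unfolding sum_over_fibers[OF i] transition_matrix_def by simp
    qed
    also have "\<dots> = block_marginal i a"
      by (rule block_marginal_eq[symmetric])
    finally show ?thesis
      using block_marginal_pos[OF i a] unfolding block_kernel_eq
      by (simp add: sum_divide_distrib[symmetric])
  qed
  then show ?thesis
    using R block_kernel_nonneg unfolding transition_matrix_def by auto
qed

lemma block_kernel_pos_on_support:
  assumes R_nonneg: "\<forall>x\<in>state_space. \<forall>y\<in>state_space. 0 \<le> R x y"
    and i: "i \<in> {1..n}" and x: "x \<in> state_space" and y: "y \<in> state_space"
    and support: "p x * R x y \<noteq> 0"
  shows "0 < block_kernel i R (restrict x (S i)) (restrict y (S i))"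
proof -
  have flow_terms_nonneg: "0 \<le> p x' * R x' y'" if "x' \<in> state_space" "y' \<in> state_space" for x' y'
    using that R_nonneg p_pos by (simp add: less_imp_le)
  have "p x * R x y \<le> (\<Sum>y'\<in>fiber i (restrict y (S i)). p x * R x y')"
    using x y flow_terms_nonneg finite_fiber by (intro member_le_sum) (auto simp: fiber_def)
  also have "\<dots> \<le> block_flow i R (restrict x (S i)) (restrict y (S i))"
    unfolding block_flow_def using x flow_terms_nonneg finite_fiber
    by (intro member_le_sum sum_nonneg) (auto simp: fiber_def)
  finally have "0 < block_flow i R (restrict x (S i)) (restrict y (S i))"
    using flow_terms_nonneg[OF x y] support by linarith
  then show ?thesis
    unfolding block_kernel_eq using block_marginal_pos[OF i restrict_in_block_space[OF x i]] by simp
qed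

lemma block_kernel_tensor:
  assumes Q: "\<forall>k\<in>{1..n}. transition_matrix (block_space k) (Q k)"
    and i: "i \<in> {1..n}" and a: "a \<in> block_space i" and b: "b \<in> block_space i"
  shows "block_kernel i (tensor S n Q) a b = Q i a b"
proof -
  have "block_flow i (tensor S n Q) a b = (\<Sum>x\<in>fiber i a. p x * (\<Sum>y\<in>fiber i b. tensor S n Q x y))"
    unfolding block_flow_def by (simp add: sum_distrib_left)
  also have "\<dots> = (\<Sum>x\<in>fiber i a. p x * Q i a b)"
    using sum_fiber_tensor[OF Q _ i b] by (intro sum.cong refl) (auto simp: fiber_def)
  also have "\<dots> = block_marginal i a * Q i a b"
    unfolding block_marginal_eq by (simp add: sum_distrib_right)
  finally show ?thesis
    unfolding block_kernel_eq using block_marginal_pos[OF i a] by simp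
qed

lemma KL_div_block_kernel_eq_ereal:
  assumes i: "i \<in> {1..n}"
    and support: "\<forall>x\<in>state_space. \<forall>y\<in>state_space.
      p x * R x y \<noteq> 0 \<longrightarrow> L (restrict x (S i)) (restrict y (S i)) \<noteq> 0"
  shows "KL_div (block_marginal i) (block_space i) (block_kernel i R) L
       = ereal (\<Sum>x\<in>state_space. \<Sum>y\<in>state_space. p x * R x y *
           ln (block_kernel i R (restrict x (S i)) (restrict y (S i)) / L (restrict x (S i)) (restrict y (S i))))"
proof -
  have block_support: "\<forall>a\<in>block_space i. \<forall>b\<in>block_space i.
      block_marginal i a * block_kernel i R a b \<noteq> 0 \<longrightarrow> L a b \<noteq> 0"
  proof (intro ballI impI)
    fix a b assume a: "a \<in> block_space i" and "b \<in> block_space i"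
      and "block_marginal i a * block_kernel i R a b \<noteq> 0"
    then have "block_flow i R a b \<noteq> 0"
      using block_marginal_mult_kernel[OF i a] by metis
    then obtain x y where "x \<in> fiber i a" "y \<in> fiber i b" "p x * R x y \<noteq> 0"
      unfolding block_flow_def by (meson sum.neutral)
    then show "L a b \<noteq> 0"
      using support by (auto simp: fiber_def)
  qed
  have "(\<Sum>a\<in>block_space i. \<Sum>b\<in>block_space i.
          block_marginal i a * block_kernel i R a b * ln (block_kernel i R a b / L a b))
      = (\<Sum>a\<in>block_space i. \<Sum>b\<in>block_space i. block_flow i R a b * ln (block_kernel i R a b / L a b))"
    using block_marginal_mult_kernel[OF i] by simp
  also have "\<dots> = (\<Sum>x\<in>state_space. \<Sum>y\<in>state_space. p x * R x y *
           ln (block_kernel i R (restrict x (S i)) (restrict y (S i)) / L (restrict x (S i)) (restrict y (S i))))"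
    unfolding block_flow_def by (rule sum_sum_through_fibers[OF i, symmetric])
  finally show ?thesis
    using KL_div_eq_ereal[OF block_support] by simp
qed

section \<open>The Pythagorean identity and the decomposition\<close>

lemma tensor_block_kernels_pos_on_support:
  assumes R_nonneg: "\<forall>x\<in>state_space. \<forall>y\<in>state_space. 0 \<le> R x y"
    and x: "x \<in> state_space" and y: "y \<in> state_space" and support: "p x * R x y \<noteq> 0"
  shows "0 < tensor S n (\<lambda>i. block_kernel i R) x y"
  unfolding tensor_def using block_kernel_pos_on_support[OF R_nonneg _ x y support]
  by (intro prod_pos) auto

lemma KL_div_block_kernel_eq_infinity:
  assumes R_nonneg: "\<forall>x\<in>state_space. \<forall>y\<in>state_space. 0 \<le> R x y"
    and i: "i \<in> {1..n}" and x: "x \<in> state_space" and y: "y \<in> state_space"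
    and support: "p x * R x y \<noteq> 0" and "L (restrict x (S i)) (restrict y (S i)) = 0"
  shows "KL_div (block_marginal i) (block_space i) (block_kernel i R) L = \<infinity>"
  using assms block_kernel_pos_on_support[OF R_nonneg i x y support]
    block_marginal_pos[OF i restrict_in_block_space[OF x i]]
  by (intro KL_div_eq_infinity[OF finite_block_space[OF i] restrict_in_block_space[OF x i]
        restrict_in_block_space[OF y i]]) auto

lemma KL_div_tensor_block_kernels_eq_ereal:
  assumes R_nonneg: "\<forall>x\<in>state_space. \<forall>y\<in>state_space. 0 \<le> R x y"
  shows "KL_div p state_space R (tensor S n (\<lambda>i. block_kernel i R))
       = ereal (\<Sum>x\<in>state_space. \<Sum>y\<in>state_space.
           p x * R x y * ln (R x y / tensor S n (\<lambda>i. block_kernel i R) x y))"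
proof (rule KL_div_eq_ereal, intro ballI impI)
  fix x y assume "x \<in> state_space" "y \<in> state_space" "p x * R x y \<noteq> 0"
  then have "0 < tensor S n (\<lambda>i. block_kernel i R) x y"
    by (rule tensor_block_kernels_pos_on_support[OF R_nonneg])
  then show "tensor S n (\<lambda>i. block_kernel i R) x y \<noteq> 0"
    by simp
qed

lemma mult_ln_div_tensor_split:
  assumes R_nonneg: "\<forall>x\<in>state_space. \<forall>y\<in>state_space. 0 \<le> R x y"
    and L_nonneg: "\<forall>i\<in>{1..n}. \<forall>a\<in>block_space i. \<forall>b\<in>block_space i. 0 \<le> L i a b"
    and L_support: "\<forall>i\<in>{1..n}. \<forall>x\<in>state_space. \<forall>y\<in>state_space.
      p x * R x y \<noteq> 0 \<longrightarrow> L i (restrict x (S i)) (restrict y (S i)) \<noteq> 0"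
    and x: "x \<in> state_space" and y: "y \<in> state_space"
  shows "p x * R x y * ln (R x y / tensor S n L x y)
       = p x * R x y * ln (R x y / tensor S n (\<lambda>i. block_kernel i R) x y)
         + (\<Sum>i\<in>{1..n}. p x * R x y *
              ln (block_kernel i R (restrict x (S i)) (restrict y (S i)) / L i (restrict x (S i)) (restrict y (S i))))"
proof (cases "p x * R x y = 0")
  case False
  have "0 < L i (restrict x (S i)) (restrict y (S i))" if i: "i \<in> {1..n}" for i
    using L_nonneg L_support i x y False restrict_in_block_space[OF x i] restrict_in_block_space[OF y i]
    by (simp add: less_le)
  moreover have "0 < R x y"
    using R_nonneg x y False by (simp add: less_le)
  ultimately have "ln (R x y / tensor S n L x y) = ln (R x y / tensor S n (\<lambda>i. block_kernel i R) x y)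
      + (\<Sum>i\<in>{1..n}. ln (block_kernel i R (restrict x (S i)) (restrict y (S i))
                         / L i (restrict x (S i)) (restrict y (S i))))"
    unfolding tensor_def using block_kernel_pos_on_support[OF R_nonneg _ x y False]
    by (intro ln_div_prod_eq) auto
  then show ?thesis
    by (simp add: sum_distrib_left distrib_left)
qed auto

lemma KL_div_tensor_pythagorean:
  assumes R_nonneg: "\<forall>x\<in>state_space. \<forall>y\<in>state_space. 0 \<le> R x y"
    and L_nonneg: "\<forall>i\<in>{1..n}. \<forall>a\<in>block_space i. \<forall>b\<in>block_space i. 0 \<le> L i a b"
  shows "KL_div p state_space R (tensor S n L)
       = KL_div p state_space R (tensor S n (\<lambda>i. block_kernel i R))
         + (\<Sum>i\<in>{1..n}. KL_div (block_marginal i) (block_space i) (block_kernel i R) (L i))"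
proof (cases "\<forall>x\<in>state_space. \<forall>y\<in>state_space. p x * R x y \<noteq> 0 \<longrightarrow> tensor S n L x y \<noteq> 0")
  case False
  then obtain x y where x: "x \<in> state_space" and y: "y \<in> state_space"
    and support: "p x * R x y \<noteq> 0" and "tensor S n L x y = 0"
    by blast
  moreover from \<open>tensor S n L x y = 0\<close> obtain i where i: "i \<in> {1..n}"
    and "L i (restrict x (S i)) (restrict y (S i)) = 0"
    unfolding tensor_def by auto
  ultimately have lhs: "KL_div p state_space R (tensor S n L) = \<infinity>"
    and "KL_div (block_marginal i) (block_space i) (block_kernel i R) (L i) = \<infinity>"
    using KL_div_eq_infinity[OF finite_state_space] KL_div_block_kernel_eq_infinity[OF R_nonneg]
    by blast+
  then have "(\<Sum>i\<in>{1..n}. KL_div (block_marginal i) (block_space i) (block_kernel i R) (L i)) = \<infinity>"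
    using i by (auto simp: sum_Pinfty)
  then show ?thesis
    using lhs KL_div_neq_minf by simp
next
  case support: True
  have L_support: "\<forall>i\<in>{1..n}. \<forall>x\<in>state_space. \<forall>y\<in>state_space.
      p x * R x y \<noteq> 0 \<longrightarrow> L i (restrict x (S i)) (restrict y (S i)) \<noteq> 0"
    using support unfolding tensor_def by auto
  define D where "D i x y = p x * R x y * ln (block_kernel i R (restrict x (S i)) (restrict y (S i))
    / L i (restrict x (S i)) (restrict y (S i)))" for i x y
  have blocks: "KL_div (block_marginal i) (block_space i) (block_kernel i R) (L i)
      = ereal (\<Sum>x\<in>state_space. \<Sum>y\<in>state_space. D i x y)" if i: "i \<in> {1..n}" for i
    unfolding D_def using L_support i by (intro KL_div_block_kernel_eq_ereal) auto
  have pointwise: "p x * R x y * ln (R x y / tensor S n L x y)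
      = p x * R x y * ln (R x y / tensor S n (\<lambda>i. block_kernel i R) x y) + (\<Sum>i\<in>{1..n}. D i x y)"
    if "x \<in> state_space" "y \<in> state_space" for x y
    unfolding D_def by (rule mult_ln_div_tensor_split[OF R_nonneg L_nonneg L_support that])
  have swap: "(\<Sum>x\<in>state_space. \<Sum>y\<in>state_space. \<Sum>i\<in>{1..n}. D i x y)
      = (\<Sum>i\<in>{1..n}. \<Sum>x\<in>state_space. \<Sum>y\<in>state_space. D i x y)"
    by (simp only: sum.swap[where B = "{1..n}"])
  have "KL_div p state_space R (tensor S n L)
      = ereal (\<Sum>x\<in>state_space. \<Sum>y\<in>state_space. p x * R x y * ln (R x y / tensor S n L x y))"
    by (rule KL_div_eq_ereal[OF support])
  also have "\<dots> = ereal (\<Sum>x\<in>state_space. \<Sum>y\<in>state_space.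
        p x * R x y * ln (R x y / tensor S n (\<lambda>i. block_kernel i R) x y))
      + ereal (\<Sum>i\<in>{1..n}. \<Sum>x\<in>state_space. \<Sum>y\<in>state_space. D i x y)"
    unfolding swap[symmetric] by (simp add: pointwise sum.distrib)
  also have "\<dots> = KL_div p state_space R (tensor S n (\<lambda>i. block_kernel i R))
      + (\<Sum>i\<in>{1..n}. KL_div (block_marginal i) (block_space i) (block_kernel i R) (L i))"
    using KL_div_tensor_block_kernels_eq_ereal[OF R_nonneg] sum.cong[OF refl blocks, of "{1..n}"]
    by simp
  finally show ?thesis .
qed

definition block_divergence ::
  "nat \<Rightarrow> ((nat \<Rightarrow> 'a) \<Rightarrow> (nat \<Rightarrow> 'a) \<Rightarrow> real) \<Rightarrow> (nat \<Rightarrow> 'a \<Rightarrow> 'a \<Rightarrow> real) \<Rightarrow> ereal" where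
  "block_divergence i R Ls = KL_div (block_marginal i) (block_space i) (block_kernel i R)
     (\<lambda>a b. \<Prod>j\<in>S i. Ls j (a j) (b j))"

lemma kernel_families_nonempty: "kernel_families {1..d} \<noteq> {}"
proof -
  have "transition_matrix (Xs j) (\<lambda>_ _. 1 / real (card (Xs j)))" if "j \<in> {1..d}" for j
    using that finite_factors factor_nonempty by (intro transition_matrix_uniform) auto
  then have "(\<lambda>j _ _. 1 / real (card (Xs j))) \<in> kernel_families {1..d}"
    by simp
  then show ?thesis
    by blast
qed

lemma transition_matrix_block_prod:
  assumes i: "i \<in> {1..n}" and Ls: "Ls \<in> kernel_families {1..d}"
  shows "transition_matrix (block_space i) (\<lambda>a b. \<Prod>j\<in>S i. Ls j (a j) (b j))"
proof (rule transition_matrix_PiE_prod[OF finite_block[OF i]])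
  show "\<forall>j\<in>S i. finite (Xs j)" "\<forall>j\<in>S i. transition_matrix (Xs j) (Ls j)"
    using Ls finite_factors block_subset[OF i] by (auto simp: Pi_iff)
qed

lemma block_divergence_nonneg:
  assumes P: "transition_matrix state_space P"
    and i: "i \<in> {1..n}" and Ls: "Ls \<in> kernel_families {1..d}"
  shows "0 \<le> block_divergence i P Ls"
  unfolding block_divergence_def
  using transition_matrix_block_kernel[OF i P] block_marginal_nonneg
  by (intro KL_div_nonneg[OF finite_block_space[OF i] _ _ _ transition_matrix_block_prod[OF i Ls]])
     (auto simp: transition_matrix_def)

lemma block_divergence_local:
  assumes "\<forall>j\<in>S i. Ls j = Ls' j"
  shows "block_divergence i R Ls = block_divergence i R Ls'"
proof -
  have "(\<lambda>a b. \<Prod>j\<in>S i. Ls j (a j) (b j)) = (\<lambda>a b. \<Prod>j\<in>S i. Ls' j (a j) (b j))"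
    using assms by (intro ext prod.cong) auto
  then show ?thesis
    unfolding block_divergence_def by simp
qed

lemma KL_div_prod_coordinates:
  assumes R_nonneg: "\<forall>x\<in>state_space. \<forall>y\<in>state_space. 0 \<le> R x y"
    and Ls: "Ls \<in> kernel_families {1..d}"
  shows "KL_div p state_space R (\<lambda>x y. \<Prod>j\<in>{1..d}. Ls j (x j) (y j))
       = KL_div p state_space R (tensor S n (\<lambda>i. block_kernel i R))
         + (\<Sum>i\<in>{1..n}. block_divergence i R Ls)"
  unfolding prod_coordinates_eq_tensor block_divergence_def
  using transition_matrix_block_prod[OF _ Ls]
  by (intro KL_div_tensor_pythagorean[OF R_nonneg]) (auto simp: transition_matrix_def)

lemma tensor_block_kernel_tensor:
  assumes P: "transition_matrix state_space P"
    and x: "x \<in> state_space" and y: "y \<in> state_space"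
  shows "tensor S n (\<lambda>i. block_kernel i (tensor S n (\<lambda>k. block_kernel k P))) x y
       = tensor S n (\<lambda>k. block_kernel k P) x y"
proof -
  have "block_kernel i (tensor S n (\<lambda>k. block_kernel k P)) (restrict x (S i)) (restrict y (S i))
      = block_kernel i P (restrict x (S i)) (restrict y (S i))" if i: "i \<in> {1..n}" for i
    using transition_matrix_block_kernel[OF _ P] i restrict_in_block_space[OF x i]
      restrict_in_block_space[OF y i]
    by (intro block_kernel_tensor) auto
  then show ?thesis
    unfolding tensor_def[of S n _ x y] by (intro prod.cong) auto
qed

lemma block_divergence_tensor_block_kernels:
  assumes P: "transition_matrix state_space P" and i: "i \<in> {1..n}"
  shows "block_divergence i (tensor S n (\<lambda>k. block_kernel k P)) Ls = block_divergence i P Ls"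
  unfolding block_divergence_def
  using block_kernel_tensor[OF _ i] transition_matrix_block_kernel[OF _ P]
  by (intro KL_div_cong) auto

lemma I_part_eq_KL_div_tensor_block_kernels:
  assumes P: "transition_matrix state_space P"
  shows "I_part Xs {1..d} p P S n = KL_div p state_space P (tensor S n (\<lambda>i. block_kernel i P))"
proof -
  let ?D = "\<lambda>Ls. KL_div p state_space P (tensor S n Ls)"
  let ?M = "{Ls. \<forall>i\<in>{1..n}. transition_matrix (block_space i) (Ls i)}"
  have "I_part Xs {1..d} p P S n = (INF Ls\<in>?M. ?D Ls)"
    unfolding I_part_def setcompr_eq_image ..
  also have "\<dots> = ?D (\<lambda>i. block_kernel i P)"
  proof (rule antisym)
    show "(INF Ls\<in>?M. ?D Ls) \<le> ?D (\<lambda>i. block_kernel i P)"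
      using transition_matrix_block_kernel[OF _ P] by (intro INF_lower) simp
    show "?D (\<lambda>i. block_kernel i P) \<le> (INF Ls\<in>?M. ?D Ls)"
    proof (rule INF_greatest)
      fix Ls assume Ls: "Ls \<in> ?M"
      have "?D Ls = ?D (\<lambda>i. block_kernel i P)
          + (\<Sum>i\<in>{1..n}. KL_div (block_marginal i) (block_space i) (block_kernel i P) (Ls i))"
        using P Ls unfolding transition_matrix_def by (intro KL_div_tensor_pythagorean) auto
      moreover have "0 \<le> (\<Sum>i\<in>{1..n}. KL_div (block_marginal i) (block_space i) (block_kernel i P) (Ls i))"
        using Ls transition_matrix_block_kernel[OF _ P] block_marginal_nonneg
        by (intro sum_nonneg KL_div_nonneg finite_block_space) (auto simp: transition_matrix_def)
      ultimately show "?D (\<lambda>i. block_kernel i P) \<le> ?D Ls"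
        using add_increasing2[OF _ order_refl] by simp
    qed
  qed
  finally show ?thesis .
qed

lemma INF_sum_block_divergence:
  assumes P: "transition_matrix state_space P"
  shows "(INF Ls\<in>kernel_families {1..d}. \<Sum>i\<in>{1..n}. block_divergence i P Ls)
       = (\<Sum>i\<in>{1..n}. dist_indep Xs (S i) (block_marginal i) (block_kernel i P))"
proof -
  have "(INF Ls\<in>kernel_families {1..d}. \<Sum>i\<in>{1..n}. block_divergence i P Ls)
      = (\<Sum>i\<in>{1..n}. INF Ls\<in>kernel_families {1..d}. block_divergence i P Ls)"
    using kernel_families_nonempty blocks_disjoint block_divergence_local block_divergence_nonneg[OF P]
    by (intro INF_sum_separable) auto
  also have "\<dots> = (\<Sum>i\<in>{1..n}. dist_indep Xs (S i) (block_marginal i) (block_kernel i P))"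
  proof (rule sum.cong[OF refl])
    fix i assume i: "i \<in> {1..n}"
    have "(INF Ls\<in>kernel_families {1..d}. block_divergence i P Ls)
        = (INF Ls\<in>kernel_families (S i). block_divergence i P Ls)"
      using block_subset[OF i] kernel_families_nonempty block_divergence_local
      by (intro INF_Pi_local) auto
    then show "(INF Ls\<in>kernel_families {1..d}. block_divergence i P Ls)
        = dist_indep Xs (S i) (block_marginal i) (block_kernel i P)"
      unfolding dist_indep_eq_INF block_divergence_def .
  qed
  finally show ?thesis .
qed

lemma dist_indep_tensor_block_kernels:
  assumes P: "transition_matrix state_space P"
  shows "dist_indep Xs {1..d} p (tensor S n (\<lambda>i. block_kernel i P))
       = (\<Sum>i\<in>{1..n}. dist_indep Xs (S i) (block_marginal i) (block_kernel i P))"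
proof -
  let ?T = "tensor S n (\<lambda>i. block_kernel i P)"
  have T_nonneg: "\<forall>x\<in>state_space. \<forall>y\<in>state_space. 0 \<le> ?T x y"
    using P block_kernel_nonneg unfolding tensor_def transition_matrix_def
    by (auto intro!: prod_nonneg)
  have "dist_indep Xs {1..d} p ?T = (INF Ls\<in>kernel_families {1..d}. \<Sum>i\<in>{1..n}. block_divergence i P Ls)"
    unfolding dist_indep_eq_INF
  proof (rule INF_cong[OF refl])
    fix Ls assume Ls: "Ls \<in> kernel_families {1..d}"
    have "KL_div p state_space ?T (tensor S n (\<lambda>i. block_kernel i ?T)) = KL_div p state_space ?T ?T"
      using tensor_block_kernel_tensor[OF P] by (intro KL_div_cong) auto
    then show "KL_div p state_space ?T (\<lambda>x y. \<Prod>j\<in>{1..d}. Ls j (x j) (y j))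
        = (\<Sum>i\<in>{1..n}. block_divergence i P Ls)"
      unfolding KL_div_prod_coordinates[OF T_nonneg Ls] KL_div_self
      using block_divergence_tensor_block_kernels[OF P] by simp
  qed
  also have "\<dots> = (\<Sum>i\<in>{1..n}. dist_indep Xs (S i) (block_marginal i) (block_kernel i P))"
    by (rule INF_sum_block_divergence[OF P])
  finally show ?thesis .
qed

lemma dist_indep_eq_I_part_add:
  assumes P: "transition_matrix state_space P"
  shows "dist_indep Xs {1..d} p P
       = I_part Xs {1..d} p P S n + dist_indep Xs {1..d} p (tensor S n (\<lambda>i. block_kernel i P))"
proof -
  let ?D0 = "KL_div p state_space P (tensor S n (\<lambda>i. block_kernel i P))"
  have "dist_indep Xs {1..d} p P
      = (INF Ls\<in>kernel_families {1..d}. ?D0 + (\<Sum>i\<in>{1..n}. block_divergence i P Ls))"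
    unfolding dist_indep_eq_INF
  proof (rule INF_cong[OF refl])
    fix Ls assume "Ls \<in> kernel_families {1..d}"
    moreover have "\<forall>x\<in>state_space. \<forall>y\<in>state_space. 0 \<le> P x y"
      using P unfolding transition_matrix_def by blast
    ultimately show "KL_div p state_space P (\<lambda>x y. \<Prod>j\<in>{1..d}. Ls j (x j) (y j))
        = ?D0 + (\<Sum>i\<in>{1..n}. block_divergence i P Ls)"
      by (intro KL_div_prod_coordinates)
  qed
  also have "\<dots> = ?D0 + (INF Ls\<in>kernel_families {1..d}. \<Sum>i\<in>{1..n}. block_divergence i P Ls)"
    using block_divergence_nonneg[OF P]
    by (intro INF_ereal_add_right kernel_families_nonempty KL_div_neq_minf sum_nonneg) auto
  finally show ?thesis
    unfolding I_part_eq_KL_div_tensor_block_kernels[OF P] INF_sum_block_divergence[OF P]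
      dist_indep_tensor_block_kernels[OF P] .
qed

end

theorem corollary2p25:
  fixes Xs :: "nat \<Rightarrow> 'a set" and d n :: nat and S :: "nat \<Rightarrow> nat set"
    and p :: "(nat \<Rightarrow> 'a) \<Rightarrow> real" and P :: "(nat \<Rightarrow> 'a) \<Rightarrow> (nat \<Rightarrow> 'a) \<Rightarrow> real"
  assumes fin: "\<forall>j\<in>{1..d}. finite (Xs j)"
    and S_nonempty: "\<forall>i\<in>{1..n}. S i \<noteq> {}"
    and S_disjoint: "\<forall>i\<in>{1..n}. \<forall>k\<in>{1..n}. i \<noteq> k \<longrightarrow> S i \<inter> S k = {}"
    and S_cover: "(\<Union>i\<in>{1..n}. S i) = {1..d}"
    and p_dist: "prob_dist (PiE {1..d} Xs) p"
    and p_pos: "\<forall>x\<in>PiE {1..d} Xs. 0 < p x"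
    and P_tm: "transition_matrix (PiE {1..d} Xs) P"
  shows "dist_indep Xs {1..d} p P
           = I_part Xs {1..d} p P S n
             + dist_indep Xs {1..d} p (tensor S n (\<lambda>i. marg_kernel Xs {1..d} (S i) p P))
       \<and> dist_indep Xs {1..d} p P
           = I_part Xs {1..d} p P S n
             + (\<Sum>i\<in>{1..n}. dist_indep Xs (S i) (marginal Xs {1..d} (S i) p)
                                 (marg_kernel Xs {1..d} (S i) p P))"
proof -
  interpret block_distribution Xs d n S p
    using fin S_disjoint S_cover p_dist p_pos by unfold_locales auto
  show ?thesis
    using dist_indep_eq_I_part_add[OF P_tm] dist_indep_tensor_block_kernels[OF P_tm] by simp
qed

end
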